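(* Let $A$ be a ring with Jacobson radical $J(A)$. If the factor ring $A/J(A)$ is centrally essential, then $A/J(A)$ is commutative and $A$ is both right quasi-invariant and left quasi-invariant.
   Context: All rings are associative, unital and non-zero. $Z(A)$ denotes the center of a ring $A$. A ring $A$ is centrally essential if either $A$ is commutative or for every non-central element $a\in A$ there exist non-zero central elements $x,y\in Z(A)$ with $ax=y$ (equivalently, the module $A_{Z(A)}$ is an essential extension of $Z(A)_{Z(A)}$). A ring is right (resp. left) quasi-invariant if every maximal right (resp. left) ideal of it is a two-sided ideal. *)

theory Defs
  imports "HOL-Algebra.QuotRing"
begin

definition right_ideal :: "'a set \<Rightarrow> ('a, 'b) ring_scheme \<Rightarrow> bool" where
  "right_ideal I R \<longleftrightarrow> additive_subgroup I R \<and>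
     (\<forall>a\<in>I. \<forall>x\<in>carrier R. a \<otimes>\<^bsub>R\<^esub> x \<in> I)"

definition left_ideal :: "'a set \<Rightarrow> ('a, 'b) ring_scheme \<Rightarrow> bool" where
  "left_ideal I R \<longleftrightarrow> additive_subgroup I R \<and>
     (\<forall>a\<in>I. \<forall>x\<in>carrier R. x \<otimes>\<^bsub>R\<^esub> a \<in> I)"

definition maximal_right_ideal :: "'a set \<Rightarrow> ('a, 'b) ring_scheme \<Rightarrow> bool" where
  "maximal_right_ideal M R \<longleftrightarrow> right_ideal M R \<and> M \<noteq> carrier R \<and>
     (\<forall>K. right_ideal K R \<and> M \<subseteq> K \<longrightarrow> K = M \<or> K = carrier R)"

definition maximal_left_ideal :: "'a set \<Rightarrow> ('a, 'b) ring_scheme \<Rightarrow> bool" where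
  "maximal_left_ideal M R \<longleftrightarrow> left_ideal M R \<and> M \<noteq> carrier R \<and>
     (\<forall>K. left_ideal K R \<and> M \<subseteq> K \<longrightarrow> K = M \<or> K = carrier R)"

definition jacobson :: "('a, 'b) ring_scheme \<Rightarrow> 'a set" where
  "jacobson R = carrier R \<inter> \<Inter> {M. maximal_right_ideal M R}"

definition ring_center :: "('a, 'b) ring_scheme \<Rightarrow> 'a set" where
  "ring_center R = {z \<in> carrier R. \<forall>a\<in>carrier R. z \<otimes>\<^bsub>R\<^esub> a = a \<otimes>\<^bsub>R\<^esub> z}"

definition is_commutative :: "('a, 'b) ring_scheme \<Rightarrow> bool" where
  "is_commutative R \<longleftrightarrow> (\<forall>a\<in>carrier R. \<forall>b\<in>carrier R. a \<otimes>\<^bsub>R\<^esub> b = b \<otimes>\<^bsub>R\<^esub> a)"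

definition centrally_essential :: "('a, 'b) ring_scheme \<Rightarrow> bool" where
  "centrally_essential R \<longleftrightarrow> is_commutative R \<or>
     (\<forall>a \<in> carrier R - ring_center R. \<exists>x\<in>ring_center R. \<exists>y\<in>ring_center R.
        x \<noteq> \<zero>\<^bsub>R\<^esub> \<and> y \<noteq> \<zero>\<^bsub>R\<^esub> \<and> a \<otimes>\<^bsub>R\<^esub> x = y)"

definition right_quasi_invariant :: "('a, 'b) ring_scheme \<Rightarrow> bool" where
  "right_quasi_invariant R \<longleftrightarrow> (\<forall>M. maximal_right_ideal M R \<longrightarrow> ideal M R)"

definition left_quasi_invariant :: "('a, 'b) ring_scheme \<Rightarrow> bool" where
  "left_quasi_invariant R \<longleftrightarrow> (\<forall>M. maximal_left_ideal M R \<longrightarrow> ideal M R)"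

end

theory Submission
  imports Defs
begin

text \<open>
  Every maximal right ideal contains \<open>J = J(A)\<close> by definition, and so does every maximal left
  ideal, because \<open>1 - j\<close> is left invertible for \<open>j \<in> J\<close>. Hence, once \<open>A/J\<close> is commutative, all
  commutators \<open>ab - ba\<close> lie in every maximal one-sided ideal, and such an ideal is two-sided.

  \<open>A/J\<close> has no nonzero central square-zero elements: if \<open>c\<close> is central modulo \<open>J\<close> and
  \<open>c\<^sup>2 \<in> J\<close>, then \<open>(cr)\<^sup>2 \<in> J\<close>, so \<open>1 - (cr)\<^sup>2 = (1 - cr)(1 + cr)\<close> and hence \<open>1 - cr\<close> is right
  invertible for all \<open>r\<close>, i.e. \<open>c \<in> J\<close>. A centrally essential ring with this property is
  commutative: a commutator \<open>d = ab - ba \<noteq> 0\<close> has a nonzero central multiple \<open>t = dx\<close> with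
  \<open>x\<close> central and \<open>at\<close> central; then \<open>dt = (at)b - b(at) = 0\<close> and \<open>t\<^sup>2 = dtx = 0\<close>.
\<close>

section \<open>The opposite ring\<close>

definition opposite_ring :: "('a, 'b) ring_scheme \<Rightarrow> ('a, 'b) ring_scheme" where
  "opposite_ring R = R\<lparr>mult := \<lambda>x y. y \<otimes>\<^bsub>R\<^esub> x\<rparr>"

lemma opposite_ring_simps [simp]:
  "carrier (opposite_ring R) = carrier R"
  "\<one>\<^bsub>opposite_ring R\<^esub> = \<one>\<^bsub>R\<^esub>"
  "\<zero>\<^bsub>opposite_ring R\<^esub> = \<zero>\<^bsub>R\<^esub>"
  "x \<oplus>\<^bsub>opposite_ring R\<^esub> y = x \<oplus>\<^bsub>R\<^esub> y"
  "x \<otimes>\<^bsub>opposite_ring R\<^esub> y = y \<otimes>\<^bsub>R\<^esub> x"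
  by (simp_all add: opposite_ring_def)

lemma (in ring) ring_opposite_ring: "ring (opposite_ring R)"
  by unfold_locales (auto simp: m_assoc l_distr r_distr a_ac Units_def intro: add.l_inv_ex)

lemma additive_subgroup_opposite_ring_iff:
  "additive_subgroup I (opposite_ring R) \<longleftrightarrow> additive_subgroup I R"
  by (simp add: additive_subgroup_def opposite_ring_def)

lemma left_ideal_iff_right_ideal_opposite:
  "left_ideal I R \<longleftrightarrow> right_ideal I (opposite_ring R)"
  by (simp add: left_ideal_def right_ideal_def additive_subgroup_opposite_ring_iff)

lemma maximal_left_ideal_iff_maximal_right_ideal_opposite:
  "maximal_left_ideal I R \<longleftrightarrow> maximal_right_ideal I (opposite_ring R)"
  by (simp add: maximal_left_ideal_def maximal_right_ideal_def left_ideal_iff_right_ideal_opposite)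

section \<open>One-sided ideals\<close>

context ring
begin

lemma additive_subgroup_closedI:
  assumes "I \<subseteq> carrier R" "\<zero> \<in> I" "\<And>a b. a \<in> I \<Longrightarrow> b \<in> I \<Longrightarrow> a \<oplus> b \<in> I"
    and "\<And>a. a \<in> I \<Longrightarrow> \<ominus> a \<in> I"
  shows "additive_subgroup I R"
  by (intro additive_subgroupI add.subgroupI) (use assms in \<open>auto simp: a_inv_def[symmetric]\<close>)

lemma right_ideal_additive_subgroup: "right_ideal I R \<Longrightarrow> additive_subgroup I R"
  by (simp add: right_ideal_def)

lemma right_ideal_subset: "right_ideal I R \<Longrightarrow> I \<subseteq> carrier R"
  by (simp add: right_ideal_def additive_subgroup.a_subset)

lemma right_ideal_mult_closed: "right_ideal I R \<Longrightarrow> a \<in> I \<Longrightarrow> x \<in> carrier R \<Longrightarrow> a \<otimes> x \<in> I"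
  by (simp add: right_ideal_def)

lemma right_ideal_minus_closed: "right_ideal I R \<Longrightarrow> a \<in> I \<Longrightarrow> b \<in> I \<Longrightarrow> a \<ominus> b \<in> I"
  by (simp add: right_ideal_def minus_eq additive_subgroup.a_closed additive_subgroup.a_inv_closed)

lemma right_ideal_one_imp_carrier: "right_ideal I R \<Longrightarrow> \<one> \<in> I \<Longrightarrow> I = carrier R"
  using right_ideal_subset[of I] right_ideal_mult_closed[of I \<one>] by (auto simp: subset_iff)

lemma maximal_right_ideal_one_notin: "maximal_right_ideal M R \<Longrightarrow> \<one> \<notin> M"
  using right_ideal_one_imp_carrier by (auto simp: maximal_right_ideal_def)

lemma ideal_imp_right_ideal: "ideal I R \<Longrightarrow> right_ideal I R"
  by (simp add: right_ideal_def ideal.axioms(1) ideal.I_r_closed)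

lemma right_ideal_Inter:
  assumes "S \<noteq> {}" and S: "\<And>I. I \<in> S \<Longrightarrow> right_ideal I R"
  shows "right_ideal (\<Inter>S) R"
proof -
  have sg: "additive_subgroup I R" if "I \<in> S" for I
    using S[OF that] by (rule right_ideal_additive_subgroup)
  have "additive_subgroup (\<Inter>S) R"
  proof (rule additive_subgroup_closedI)
    obtain I where I: "I \<in> S" using \<open>S \<noteq> {}\<close> by blast
    then have "\<Inter>S \<subseteq> I" by (rule Inter_lower)
    then show "\<Inter>S \<subseteq> carrier R" using right_ideal_subset[OF S[OF I]] by (rule order_trans)
    show "\<zero> \<in> \<Inter>S" by (intro InterI additive_subgroup.zero_closed sg)
    show "a \<oplus> b \<in> \<Inter>S" if "a \<in> \<Inter>S" "b \<in> \<Inter>S" for a b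
      using that by (intro InterI additive_subgroup.a_closed sg) (simp_all add: Inter_iff)
    show "\<ominus> a \<in> \<Inter>S" if "a \<in> \<Inter>S" for a
      using that by (intro InterI additive_subgroup.a_inv_closed sg) (simp_all add: Inter_iff)
  qed
  then show ?thesis
    unfolding right_ideal_def by (auto intro: right_ideal_mult_closed S)
qed

lemma right_ideal_chain_Union:
  assumes "C \<noteq> {}" and C: "\<And>I. I \<in> C \<Longrightarrow> right_ideal I R"
    and chain: "\<And>I K. I \<in> C \<Longrightarrow> K \<in> C \<Longrightarrow> I \<subseteq> K \<or> K \<subseteq> I"
  shows "right_ideal (\<Union>C) R"
proof -
  have sg: "additive_subgroup I R" if "I \<in> C" for I
    using C[OF that] by (rule right_ideal_additive_subgroup)
  have "additive_subgroup (\<Union>C) R"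
  proof (rule additive_subgroup_closedI)
    show "\<Union>C \<subseteq> carrier R" using C right_ideal_subset by (simp add: Sup_le_iff)
    obtain I where "I \<in> C" using \<open>C \<noteq> {}\<close> by blast
    then show "\<zero> \<in> \<Union>C" by (intro UnionI additive_subgroup.zero_closed sg)
    show "\<ominus> a \<in> \<Union>C" if a: "a \<in> \<Union>C" for a
    proof -
      obtain I where "I \<in> C" "a \<in> I" using a by blast
      then show ?thesis by (intro UnionI[of I] additive_subgroup.a_inv_closed sg)
    qed
    show "a \<oplus> b \<in> \<Union>C" if a: "a \<in> \<Union>C" and b: "b \<in> \<Union>C" for a b
    proof -
      obtain I K where IK: "I \<in> C" "K \<in> C" and ab: "a \<in> I" "b \<in> K" using a b by blast
      from chain[OF IK] show ?thesis
      proof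
        assume "I \<subseteq> K"
        with IK ab show ?thesis by (intro UnionI[of K] additive_subgroup.a_closed sg) auto
      next
        assume "K \<subseteq> I"
        with IK ab show ?thesis by (intro UnionI[of I] additive_subgroup.a_closed sg) auto
      qed
    qed
  qed
  moreover have "a \<otimes> x \<in> \<Union>C" if "a \<in> \<Union>C" "x \<in> carrier R" for a x
    using that C right_ideal_mult_closed by blast
  ultimately show ?thesis by (simp add: right_ideal_def)
qed

lemma right_ideal_principal_sum:
  assumes M: "right_ideal M R" and x: "x \<in> carrier R"
  shows "right_ideal {x \<otimes> r \<oplus> m | r m. r \<in> carrier R \<and> m \<in> M} R"
    (is "right_ideal ?S R")
proof -
  have Mc: "m \<in> carrier R" if "m \<in> M" for m using that right_ideal_subset[OF M] by blast
  have sg: "additive_subgroup M R" by (rule right_ideal_additive_subgroup[OF M])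
  have "additive_subgroup ?S R"
  proof (rule additive_subgroup_closedI)
    show "?S \<subseteq> carrier R" using x Mc by auto
    have "\<zero> = x \<otimes> \<zero> \<oplus> \<zero>" using x by simp
    then show "\<zero> \<in> ?S" using additive_subgroup.zero_closed[OF sg] by blast
    show "a \<oplus> b \<in> ?S" if a: "a \<in> ?S" and b: "b \<in> ?S" for a b
    proof -
      obtain r m r' m' where rm: "a = x \<otimes> r \<oplus> m" "r \<in> carrier R" "m \<in> M"
        and rm': "b = x \<otimes> r' \<oplus> m'" "r' \<in> carrier R" "m' \<in> M" using a b by blast
      then have "a \<oplus> b = x \<otimes> (r \<oplus> r') \<oplus> (m \<oplus> m')" using x Mc by algebra
      with rm rm' show ?thesis using additive_subgroup.a_closed[OF sg] by blast
    qed
    show "\<ominus> a \<in> ?S" if a: "a \<in> ?S" for a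
    proof -
      obtain r m where rm: "a = x \<otimes> r \<oplus> m" "r \<in> carrier R" "m \<in> M" using a by blast
      then have "\<ominus> a = x \<otimes> (\<ominus> r) \<oplus> (\<ominus> m)" using x Mc by algebra
      with rm show ?thesis using additive_subgroup.a_inv_closed[OF sg] by blast
    qed
  qed
  moreover have "a \<otimes> s \<in> ?S" if a: "a \<in> ?S" and s: "s \<in> carrier R" for a s
  proof -
    obtain r m where rm: "a = x \<otimes> r \<oplus> m" "r \<in> carrier R" "m \<in> M" using a by blast
    then have "a \<otimes> s = x \<otimes> (r \<otimes> s) \<oplus> m \<otimes> s" using x Mc s by algebra
    with rm s show ?thesis using right_ideal_mult_closed[OF M] by blast
  qed
  ultimately show ?thesis by (simp add: right_ideal_def)
qed

lemma exists_maximal_right_ideal: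
  assumes I: "right_ideal I R" and one: "\<one> \<notin> I"
  shows "\<exists>M. maximal_right_ideal M R \<and> I \<subseteq> M"
proof -
  define S where "S = {K. right_ideal K R \<and> I \<subseteq> K \<and> \<one> \<notin> K}"
  have "\<exists>U\<in>S. \<forall>K\<in>C. K \<subseteq> U" if C: "C \<in> chains S" for C
  proof (cases "C = {}")
    case True
    then show ?thesis using I one by (auto simp: S_def)
  next
    case False
    have "\<Union>C \<in> S"
      using chainsD2[OF C] chainsD[OF C] right_ideal_chain_Union[OF False] False
      by (fastforce simp: S_def)
    then show ?thesis by blast
  qed
  then obtain M where "M \<in> S" and max: "\<forall>K\<in>S. M \<subseteq> K \<longrightarrow> K = M"
    using Zorn_Lemma2[of S] by blast
  have "maximal_right_ideal M R"
    unfolding maximal_right_ideal_def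
  proof (intro conjI allI impI)
    show "right_ideal M R" "M \<noteq> carrier R" using \<open>M \<in> S\<close> by (auto simp: S_def)
    show "K = M \<or> K = carrier R" if "right_ideal K R \<and> M \<subseteq> K" for K
      using that right_ideal_one_imp_carrier[of K] max \<open>M \<in> S\<close> by (auto simp: S_def)
  qed
  with \<open>M \<in> S\<close> show ?thesis by (auto simp: S_def)
qed

lemma maximal_right_ideal_generates:
  assumes M: "maximal_right_ideal M R" and x: "x \<in> carrier R" and xM: "x \<notin> M"
  shows "\<exists>r\<in>carrier R. \<exists>m\<in>M. \<one> = x \<otimes> r \<oplus> m"
proof -
  let ?K = "{x \<otimes> r \<oplus> m | r m. r \<in> carrier R \<and> m \<in> M}"
  have Mr: "right_ideal M R" using M by (simp add: maximal_right_ideal_def)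
  have "m \<in> ?K" if "m \<in> M" for m
  proof -
    have "m = x \<otimes> \<zero> \<oplus> m" using x that right_ideal_subset[OF Mr] by auto
    with that show ?thesis by blast
  qed
  moreover have "x = x \<otimes> \<one> \<oplus> \<zero>" using x by simp
  then have "x \<in> ?K"
    using additive_subgroup.zero_closed[OF right_ideal_additive_subgroup[OF Mr]] by blast
  ultimately have "?K = carrier R"
    using M xM right_ideal_principal_sum[OF Mr x] unfolding maximal_right_ideal_def by blast
  then show ?thesis by blast
qed

lemma maximal_left_ideal_generates:
  assumes "maximal_left_ideal M R" "x \<in> carrier R" "x \<notin> M"
  shows "\<exists>r\<in>carrier R. \<exists>m\<in>M. \<one> = r \<otimes> x \<oplus> m"
  using ring.maximal_right_ideal_generates[OF ring_opposite_ring] assms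
  by (simp add: maximal_left_ideal_iff_maximal_right_ideal_opposite)

section \<open>The Jacobson radical\<close>

lemma jacobson_right_ideal: "right_ideal (jacobson R) R"
proof -
  have "jacobson R = \<Inter>(insert (carrier R) {M. maximal_right_ideal M R})"
    by (simp add: jacobson_def)
  also have "right_ideal \<dots> R"
  proof (rule right_ideal_Inter)
    show "right_ideal I R" if "I \<in> insert (carrier R) {M. maximal_right_ideal M R}" for I
      using that ideal_imp_right_ideal[OF oneideal] by (auto simp: maximal_right_ideal_def)
  qed simp
  finally show ?thesis .
qed

lemma jacobson_subset_carrier: "jacobson R \<subseteq> carrier R"
  by (simp add: jacobson_def)

lemma jacobson_subset_maximal_right_ideal: "maximal_right_ideal M R \<Longrightarrow> jacobson R \<subseteq> M"
  by (auto simp: jacobson_def)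

lemma jacobson_one_minus_right_invertible:
  assumes j: "j \<in> jacobson R" and r: "r \<in> carrier R"
  shows "\<exists>u\<in>carrier R. (\<one> \<ominus> j \<otimes> r) \<otimes> u = \<one>"
proof (rule ccontr)
  assume not_inv: "\<not> ?thesis"
  define q where "q = \<one> \<ominus> j \<otimes> r"
  have jc: "j \<in> carrier R" using j jacobson_subset_carrier by blast
  have qc: "q \<in> carrier R" using jc r by (simp add: q_def)
  let ?K = "{q \<otimes> s \<oplus> m | s m. s \<in> carrier R \<and> m \<in> {\<zero>}}"
  have "\<one> \<notin> ?K"
    using not_inv qc by (auto simp: q_def)
  then obtain M where M: "maximal_right_ideal M R" and KM: "?K \<subseteq> M"
    using exists_maximal_right_ideal right_ideal_principal_sum[OF ideal_imp_right_ideal[OF zeroideal] qc]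
    by blast
  have Mr: "right_ideal M R" using M by (simp add: maximal_right_ideal_def)
  have "q = q \<otimes> \<one> \<oplus> \<zero>" using qc by simp
  then have "q \<in> M" using KM by blast
  moreover have "j \<otimes> r \<in> M"
    using jacobson_subset_maximal_right_ideal[OF M] right_ideal_mult_closed[OF jacobson_right_ideal j r]
    by blast
  ultimately have "q \<oplus> j \<otimes> r \<in> M"
    using additive_subgroup.a_closed[OF right_ideal_additive_subgroup[OF Mr]] by blast
  moreover have "q \<oplus> j \<otimes> r = \<one>" unfolding q_def using jc r by algebra
  ultimately show False using maximal_right_ideal_one_notin[OF M] by simp
qed

lemma jacobson_memI:
  assumes jc: "j \<in> carrier R"
    and inv: "\<And>r. r \<in> carrier R \<Longrightarrow> \<exists>u\<in>carrier R. (\<one> \<ominus> j \<otimes> r) \<otimes> u = \<one>"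
  shows "j \<in> jacobson R"
proof -
  have "j \<in> M" if M: "maximal_right_ideal M R" for M
  proof (rule ccontr)
    assume jM: "j \<notin> M"
    have Mr: "right_ideal M R" using M by (simp add: maximal_right_ideal_def)
    obtain r m where r: "r \<in> carrier R" and m: "m \<in> M" and one: "\<one> = j \<otimes> r \<oplus> m"
      using maximal_right_ideal_generates[OF M jc jM] by blast
    have "m \<in> carrier R" using m right_ideal_subset[OF Mr] by blast
    then have "m = \<one> \<ominus> j \<otimes> r" unfolding one using jc r by algebra
    then obtain u where "u \<in> carrier R" "m \<otimes> u = \<one>" using inv[OF r] by auto
    then show False
      using right_ideal_mult_closed[OF Mr m] maximal_right_ideal_one_notin[OF M] by metis
  qed
  then show ?thesis using jc by (auto simp: jacobson_def)
qed

text \<open>If \<open>(1 - jrs)u = 1\<close>, then \<open>(1 - sjr)(1 + sujr) = 1\<close>.\<close>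

lemma jacobson_left_mult_closed:
  assumes j: "j \<in> jacobson R" and s: "s \<in> carrier R"
  shows "s \<otimes> j \<in> jacobson R"
proof (rule jacobson_memI)
  have jc: "j \<in> carrier R" using j jacobson_subset_carrier by blast
  then show "s \<otimes> j \<in> carrier R" using s by simp
  fix r assume r: "r \<in> carrier R"
  obtain u where u: "u \<in> carrier R" "(\<one> \<ominus> j \<otimes> (r \<otimes> s)) \<otimes> u = \<one>"
    using jacobson_one_minus_right_invertible[OF j] r s by blast
  have "(\<one> \<ominus> s \<otimes> j \<otimes> r) \<otimes> (\<one> \<oplus> s \<otimes> u \<otimes> j \<otimes> r)
      = \<one> \<ominus> s \<otimes> j \<otimes> r \<oplus> s \<otimes> ((\<one> \<ominus> j \<otimes> (r \<otimes> s)) \<otimes> u) \<otimes> j \<otimes> r"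
    using jc r s u(1) by (simp add: l_distr r_distr minus_eq l_minus r_minus m_assoc a_ac)
  also have "\<dots> = \<one>" using jc r s u(1) unfolding u(2) by algebra
  finally show "\<exists>v\<in>carrier R. (\<one> \<ominus> s \<otimes> j \<otimes> r) \<otimes> v = \<one>"
    using jc r s u(1) by (intro bexI[of _ "\<one> \<oplus> s \<otimes> u \<otimes> j \<otimes> r"]) auto
qed

lemma jacobson_ideal: "ideal (jacobson R) R"
  using jacobson_right_ideal
  by (intro idealI ring_axioms additive_subgroup.a_subgroup right_ideal_additive_subgroup)
     (auto intro: jacobson_left_mult_closed right_ideal_mult_closed)

text \<open>The right inverse \<open>u = 1 + ju\<close> of \<open>1 - j\<close> has a right inverse itself, as \<open>-ju \<in> J\<close>;
  so \<open>u\<close> is a unit and it is also a left inverse of \<open>1 - j\<close>.\<close>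

lemma jacobson_one_minus_left_invertible:
  assumes j: "j \<in> jacobson R"
  shows "\<exists>v\<in>carrier R. v \<otimes> (\<one> \<ominus> j) = \<one>"
proof -
  have jc: "j \<in> carrier R" using j jacobson_subset_carrier by blast
  obtain u where u: "u \<in> carrier R" "(\<one> \<ominus> j) \<otimes> u = \<one>"
    using jacobson_one_minus_right_invertible[OF j one_closed] jc by auto
  have "\<ominus> (j \<otimes> u) \<in> jacobson R"
    using right_ideal_mult_closed[OF jacobson_right_ideal j u(1)] jacobson_right_ideal
    by (simp add: right_ideal_def additive_subgroup.a_inv_closed)
  then obtain v where v: "v \<in> carrier R" "(\<one> \<ominus> (\<ominus> (j \<otimes> u)) \<otimes> \<one>) \<otimes> v = \<one>"
    using jacobson_one_minus_right_invertible[OF _ one_closed] by blast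
  have "\<one> \<ominus> (\<ominus> (j \<otimes> u)) \<otimes> \<one> = \<one> \<oplus> j \<otimes> u"
    using jc u(1) by (simp add: minus_eq)
  also have "\<dots> = (\<one> \<ominus> j) \<otimes> u \<oplus> j \<otimes> u" by (simp only: u(2))
  also have "\<dots> = u" using jc u(1) by algebra
  finally have uv: "u \<otimes> v = \<one>" using v(2) by (simp only:)
  have "\<one> \<ominus> j = ((\<one> \<ominus> j) \<otimes> u) \<otimes> v"
    using jc u(1) v(1) by (simp add: m_assoc uv)
  then have "u \<otimes> (\<one> \<ominus> j) = \<one>" using u(2) v(1) uv by simp
  with u(1) show ?thesis by blast
qed

lemma jacobson_subset_maximal_left_ideal:
  assumes L: "maximal_left_ideal L R"
  shows "jacobson R \<subseteq> L"
proof
  fix j assume j: "j \<in> jacobson R"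
  have jc: "j \<in> carrier R" using j jacobson_subset_carrier by blast
  have "\<one> \<notin> L"
    using ring.maximal_right_ideal_one_notin[OF ring_opposite_ring] L
    by (simp add: maximal_left_ideal_iff_maximal_right_ideal_opposite)
  show "j \<in> L"
  proof (rule ccontr)
    assume "j \<notin> L"
    then obtain r l where r: "r \<in> carrier R" and l: "l \<in> L" and one: "\<one> = r \<otimes> j \<oplus> l"
      using maximal_left_ideal_generates[OF L jc] by blast
    have lc: "l \<in> carrier R" using l L by (auto simp: maximal_left_ideal_def left_ideal_def
        dest: additive_subgroup.a_subset)
    obtain v where v: "v \<in> carrier R" "v \<otimes> (\<one> \<ominus> r \<otimes> j) = \<one>"
      using jacobson_one_minus_left_invertible[OF jacobson_left_mult_closed[OF j r]] by blast
    have "l = \<one> \<ominus> r \<otimes> j" unfolding one using r jc lc by algebra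
    moreover have "v \<otimes> l \<in> L" using v(1) l L by (simp add: maximal_left_ideal_def left_ideal_def)
    ultimately show False using v(2) \<open>\<one> \<notin> L\<close> by simp
  qed
qed

text \<open>\<open>(zr)\<^sup>2 \<in> J\<close> makes \<open>1 - (zr)\<^sup>2 = (1 - zr)(1 + zr)\<close> right invertible.\<close>

lemma jacobson_memI_square:
  assumes z: "z \<in> carrier R"
    and comm: "\<And>r. r \<in> carrier R \<Longrightarrow> z \<otimes> r \<ominus> r \<otimes> z \<in> jacobson R"
    and sq: "z \<otimes> z \<in> jacobson R"
  shows "z \<in> jacobson R"
proof (rule jacobson_memI[OF z])
  fix r assume r: "r \<in> carrier R"
  note J = jacobson_right_ideal
  have "z \<otimes> z \<otimes> r \<otimes> r \<in> jacobson R"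
    using right_ideal_mult_closed[OF J right_ideal_mult_closed[OF J sq r] r] .
  moreover have "z \<otimes> (z \<otimes> r \<ominus> r \<otimes> z) \<otimes> r \<in> jacobson R"
    using right_ideal_mult_closed[OF J jacobson_left_mult_closed[OF comm[OF r] z] r] .
  moreover have "z \<otimes> r \<otimes> z \<otimes> r = z \<otimes> z \<otimes> r \<otimes> r \<ominus> z \<otimes> (z \<otimes> r \<ominus> r \<otimes> z) \<otimes> r"
    using z r by algebra
  ultimately have "z \<otimes> r \<otimes> z \<otimes> r \<in> jacobson R"
    using right_ideal_minus_closed[OF J] by simp
  then obtain u where u: "u \<in> carrier R" "(\<one> \<ominus> (z \<otimes> r \<otimes> z \<otimes> r) \<otimes> \<one>) \<otimes> u = \<one>"
    using jacobson_one_minus_right_invertible[OF _ one_closed] by blast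
  have "(\<one> \<ominus> z \<otimes> r) \<otimes> ((\<one> \<oplus> z \<otimes> r) \<otimes> u) = (\<one> \<ominus> (z \<otimes> r \<otimes> z \<otimes> r) \<otimes> \<one>) \<otimes> u"
    using z r u(1) by algebra
  with u z r show "\<exists>v\<in>carrier R. (\<one> \<ominus> z \<otimes> r) \<otimes> v = \<one>"
    by (intro bexI[of _ "(\<one> \<oplus> z \<otimes> r) \<otimes> u"]) auto
qed

end

lemma (in ideal) rcos_mult_commute_iff:
  assumes a: "a \<in> carrier R" and b: "b \<in> carrier R"
  shows "(I +> a) \<otimes>\<^bsub>R Quot I\<^esub> (I +> b) = (I +> b) \<otimes>\<^bsub>R Quot I\<^esub> (I +> a)
    \<longleftrightarrow> a \<otimes> b \<ominus> b \<otimes> a \<in> I"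
  using quotient_eq_iff_same_a_r_cos[OF is_ideal] a b by (simp add: FactRing_def rcoset_mult_add)

context ring
begin

lemma quotient_jacobson_center_square_zero:
  assumes z: "z \<in> ring_center (R Quot jacobson R)"
    and square: "z \<otimes>\<^bsub>R Quot jacobson R\<^esub> z = \<zero>\<^bsub>R Quot jacobson R\<^esub>"
  shows "z = \<zero>\<^bsub>R Quot jacobson R\<^esub>"
proof -
  interpret J: ideal "jacobson R" R by (rule jacobson_ideal)
  obtain c where c: "c \<in> carrier R" and zc: "z = jacobson R +> c"
    using z by (auto simp: ring_center_def FactRing_simps)
  have "c \<otimes> r \<ominus> r \<otimes> c \<in> jacobson R" if r: "r \<in> carrier R" for r
    using z ring_hom_closed[OF J.rcos_ring_hom r] J.rcos_mult_commute_iff[OF c r]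
    by (auto simp: ring_center_def zc)
  moreover have "c \<otimes> c \<in> jacobson R"
    using square c by (intro J.rcos_const_imp_mem) (simp_all add: zc FactRing_def J.rcoset_mult_add)
  ultimately have "c \<in> jacobson R" by (rule jacobson_memI_square[OF c])
  then show ?thesis using zc a_rcos_zero[OF jacobson_ideal] by (simp add: FactRing_def)
qed

section \<open>Quasi-invariance\<close>

lemma right_ideal_imp_ideal_if_commutators_mem:
  assumes M: "right_ideal M R"
    and comm: "\<And>a b. a \<in> carrier R \<Longrightarrow> b \<in> carrier R \<Longrightarrow> a \<otimes> b \<ominus> b \<otimes> a \<in> M"
  shows "ideal M R"
proof (rule idealI[OF ring_axioms])
  show "subgroup M (add_monoid R)"
    using M by (simp add: right_ideal_def additive_subgroup.a_subgroup)
  show "a \<otimes> x \<in> M" if "a \<in> M" "x \<in> carrier R" for a x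
    using M that by (rule right_ideal_mult_closed)
  show "x \<otimes> a \<in> M" if a: "a \<in> M" and x: "x \<in> carrier R" for a x
  proof -
    have ac: "a \<in> carrier R" using a right_ideal_subset[OF M] by blast
    have "a \<otimes> x \<ominus> (a \<otimes> x \<ominus> x \<otimes> a) \<in> M"
      using right_ideal_mult_closed[OF M a x] comm[OF ac x] by (rule right_ideal_minus_closed[OF M])
    moreover have "a \<otimes> x \<ominus> (a \<otimes> x \<ominus> x \<otimes> a) = x \<otimes> a" using ac x by algebra
    ultimately show ?thesis by simp
  qed
qed

lemma left_ideal_imp_ideal_if_commutators_mem:
  assumes M: "left_ideal M R"
    and comm: "\<And>a b. a \<in> carrier R \<Longrightarrow> b \<in> carrier R \<Longrightarrow> a \<otimes> b \<ominus> b \<otimes> a \<in> M"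
  shows "ideal M R"
proof (rule idealI[OF ring_axioms])
  have sg: "additive_subgroup M R" using M by (simp add: left_ideal_def)
  then show "subgroup M (add_monoid R)" by (rule additive_subgroup.a_subgroup)
  show "x \<otimes> a \<in> M" if "a \<in> M" "x \<in> carrier R" for a x
    using M that by (simp add: left_ideal_def)
  show "a \<otimes> x \<in> M" if a: "a \<in> M" and x: "x \<in> carrier R" for a x
  proof -
    have ac: "a \<in> carrier R" using a additive_subgroup.a_subset[OF sg] by blast
    have "x \<otimes> a \<oplus> (a \<otimes> x \<ominus> x \<otimes> a) \<in> M"
      using M a x comm[OF ac x] by (simp add: left_ideal_def additive_subgroup.a_closed[OF sg])
    moreover have "x \<otimes> a \<oplus> (a \<otimes> x \<ominus> x \<otimes> a) = a \<otimes> x" using ac x by algebra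
    ultimately show ?thesis by simp
  qed
qed

lemma quasi_invariant_if_quotient_jacobson_commutative:
  assumes "is_commutative (R Quot jacobson R)"
  shows "right_quasi_invariant R \<and> left_quasi_invariant R"
proof -
  interpret J: ideal "jacobson R" R by (rule jacobson_ideal)
  have comm: "a \<otimes> b \<ominus> b \<otimes> a \<in> jacobson R" if a: "a \<in> carrier R" and b: "b \<in> carrier R" for a b
  proof -
    have "jacobson R +> a \<in> carrier (R Quot jacobson R)" "jacobson R +> b \<in> carrier (R Quot jacobson R)"
      using a b by (simp_all add: ring_hom_closed[OF J.rcos_ring_hom])
    from assms[unfolded is_commutative_def, rule_format, OF this] show ?thesis
      using J.rcos_mult_commute_iff[OF a b] by simp
  qed
  have "ideal M R" if M: "maximal_right_ideal M R" for M
  proof (rule right_ideal_imp_ideal_if_commutators_mem)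
    show "right_ideal M R" using M by (simp add: maximal_right_ideal_def)
    show "a \<otimes> b \<ominus> b \<otimes> a \<in> M" if "a \<in> carrier R" "b \<in> carrier R" for a b
      using comm[OF that] jacobson_subset_maximal_right_ideal[OF M] by (rule subsetD[rotated])
  qed
  moreover have "ideal L R" if L: "maximal_left_ideal L R" for L
  proof (rule left_ideal_imp_ideal_if_commutators_mem)
    show "left_ideal L R" using L by (simp add: maximal_left_ideal_def)
    show "a \<otimes> b \<ominus> b \<otimes> a \<in> L" if "a \<in> carrier R" "b \<in> carrier R" for a b
      using comm[OF that] jacobson_subset_maximal_left_ideal[OF L] by (rule subsetD[rotated])
  qed
  ultimately show ?thesis
    by (simp add: right_quasi_invariant_def left_quasi_invariant_def)
qed

section \<open>Centrally essential rings\<close>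

lemma ring_center_carrier: "z \<in> ring_center R \<Longrightarrow> z \<in> carrier R"
  by (simp add: ring_center_def)

lemma ring_center_commute: "z \<in> ring_center R \<Longrightarrow> a \<in> carrier R \<Longrightarrow> z \<otimes> a = a \<otimes> z"
  by (simp add: ring_center_def)

lemma ring_center_mult_closed:
  assumes x: "x \<in> ring_center R" and y: "y \<in> ring_center R"
  shows "x \<otimes> y \<in> ring_center R"
proof -
  have xc: "x \<in> carrier R" and yc: "y \<in> carrier R" using x y by (simp_all add: ring_center_def)
  have "x \<otimes> y \<otimes> a = a \<otimes> (x \<otimes> y)" if a: "a \<in> carrier R" for a
  proof -
    have "x \<otimes> y \<otimes> a = x \<otimes> (a \<otimes> y)" using xc yc a ring_center_commute[OF y a] by (simp add: m_assoc)
    also have "\<dots> = (x \<otimes> a) \<otimes> y" using xc yc a by (simp add: m_assoc)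
    also have "\<dots> = a \<otimes> (x \<otimes> y)" using xc yc a by (simp add: ring_center_commute[OF x a] m_assoc)
    finally show ?thesis .
  qed
  then show ?thesis using xc yc by (simp add: ring_center_def)
qed

lemma one_in_ring_center: "\<one> \<in> ring_center R"
  by (simp add: ring_center_def)

lemma zero_in_ring_center: "\<zero> \<in> ring_center R"
  by (simp add: ring_center_def)

lemma centrally_essential_central_multiple:
  assumes ce: "centrally_essential R" and a: "a \<in> carrier R" "a \<noteq> \<zero>"
  obtains x where "x \<in> ring_center R" "a \<otimes> x \<in> ring_center R" "a \<otimes> x \<noteq> \<zero>"
proof (cases "a \<in> ring_center R")
  case True
  then show ?thesis using that[of \<one>] one_in_ring_center a by simp
next
  case False
  then have "\<not> is_commutative R" using a by (auto simp: is_commutative_def ring_center_def)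
  then show ?thesis using ce a False that unfolding centrally_essential_def by blast
qed

lemma centrally_essential_common_central_multiple:
  assumes ce: "centrally_essential R" and a: "a \<in> carrier R" and c: "c \<in> carrier R" "c \<noteq> \<zero>"
  obtains x where "x \<in> ring_center R" "c \<otimes> x \<in> ring_center R" "c \<otimes> x \<noteq> \<zero>"
    "a \<otimes> (c \<otimes> x) \<in> ring_center R"
proof -
  obtain x where x: "x \<in> ring_center R" "c \<otimes> x \<in> ring_center R" "c \<otimes> x \<noteq> \<zero>"
    using centrally_essential_central_multiple[OF ce c] .
  note carr = a c ring_center_carrier[OF x(1)]
  show ?thesis
  proof (cases "a \<otimes> (c \<otimes> x) = \<zero>")
    case True
    then show ?thesis using that x zero_in_ring_center by simp
  next
    case False
    then obtain s where s: "s \<in> ring_center R" "a \<otimes> (c \<otimes> x) \<otimes> s \<in> ring_center R"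
      "a \<otimes> (c \<otimes> x) \<otimes> s \<noteq> \<zero>"
      using centrally_essential_central_multiple[OF ce] carr by (metis m_closed)
    have eq: "a \<otimes> (c \<otimes> (x \<otimes> s)) = a \<otimes> (c \<otimes> x) \<otimes> s"
      using carr ring_center_carrier[OF s(1)] by (simp add: m_assoc)
    show ?thesis
    proof (rule that)
      show "x \<otimes> s \<in> ring_center R" using x(1) s(1) by (rule ring_center_mult_closed)
      show "c \<otimes> (x \<otimes> s) \<in> ring_center R"
        using ring_center_mult_closed[OF x(2) s(1)] carr ring_center_carrier[OF s(1)]
        by (simp add: m_assoc)
      show "a \<otimes> (c \<otimes> (x \<otimes> s)) \<in> ring_center R" using s(2) eq by simp
      show "c \<otimes> (x \<otimes> s) \<noteq> \<zero>" using s(3) eq carr by auto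
    qed
  qed
qed

lemma centrally_essential_imp_commutative:
  assumes ce: "centrally_essential R"
    and reduced: "\<And>z. z \<in> ring_center R \<Longrightarrow> z \<otimes> z = \<zero> \<Longrightarrow> z = \<zero>"
  shows "is_commutative R"
  unfolding is_commutative_def
proof (intro ballI, rule ccontr)
  fix a b assume a: "a \<in> carrier R" and b: "b \<in> carrier R" and ne: "a \<otimes> b \<noteq> b \<otimes> a"
  define d where "d = a \<otimes> b \<ominus> b \<otimes> a"
  have d: "d \<in> carrier R" using a b by (simp add: d_def)
  have "a \<otimes> b = d \<oplus> b \<otimes> a" unfolding d_def using a b by algebra
  then have "d \<noteq> \<zero>" using ne a b by auto
  then obtain x where x: "x \<in> ring_center R" and dx: "d \<otimes> x \<in> ring_center R" "d \<otimes> x \<noteq> \<zero>"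
    and at: "a \<otimes> (d \<otimes> x) \<in> ring_center R"
    using centrally_essential_common_central_multiple[OF ce a d] by blast
  define t where "t = d \<otimes> x"
  have tc: "t \<in> carrier R" and xc: "x \<in> carrier R"
    using dx x ring_center_carrier by (simp_all add: t_def)
  have "d \<otimes> t = a \<otimes> (b \<otimes> t) \<ominus> b \<otimes> (a \<otimes> t)"
    unfolding d_def using a b tc by algebra
  also have "a \<otimes> (b \<otimes> t) = (a \<otimes> t) \<otimes> b"
    using a b tc ring_center_commute[OF dx(1)[folded t_def] b] by (simp add: m_assoc)
  also have "\<dots> = b \<otimes> (a \<otimes> t)"
    using ring_center_commute[OF at[folded t_def] b] .
  finally have dt: "d \<otimes> t = \<zero>" using a b tc by (simp add: minus_eq r_neg)
  have "t \<otimes> t = d \<otimes> (t \<otimes> x)"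
    unfolding t_def using d xc ring_center_commute[OF x] by (metis m_assoc m_closed)
  also have "\<dots> = \<zero>" using d tc xc dt by (simp add: m_assoc[symmetric])
  finally have "t = \<zero>" using reduced dx(1) by (simp add: t_def)
  with dx(2) show False by (simp add: t_def)
qed

end

theorem mainTheorem1:
  fixes A :: "('a, 'b) ring_scheme"
  assumes "ring A"
    and "\<one>\<^bsub>A\<^esub> \<noteq> \<zero>\<^bsub>A\<^esub>"
    and "centrally_essential (A Quot jacobson A)"
  shows "is_commutative (A Quot jacobson A) \<and> right_quasi_invariant A \<and> left_quasi_invariant A"
proof -
  interpret ring A by (rule assms(1))
  have "ring (A Quot jacobson A)" by (rule ideal.quotient_is_ring[OF jacobson_ideal])
  then have "is_commutative (A Quot jacobson A)"
    using assms(3) quotient_jacobson_center_square_zero by (rule ring.centrally_essential_imp_commutative)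
  with quasi_invariant_if_quotient_jacobson_commutative show ?thesis by blast
qed

end
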